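(* Suppose $\Phi(0)=0$ and $\Phi^*$ is strictly convex on $]0,\infty[$. Then for every $F\in\mathbb F_{\Phi^*}$ the function $x\mapsto\int_0^1\Phi^*(F^\leftarrow(u)+x)\,du-x$ has a unique minimizer on $\mathbb R$.
   Context: $\Phi:[0,\infty[\to[0,\infty]$ lower semicontinuous convex with $\Phi(0)<\infty$, $\Phi(x_0)<\infty$ for some $x_0>1$, $\inf_{x\ge0}\Phi(x)=0$, $\lim_{x\to\infty}\Phi(x)/x=\infty$; $\Phi^*(y)=\sup_{x\ge0}(xy-\Phi(x))$ is finite, convex, nondecreasing. On an atomless probability space, $H^{\Phi^*}=\{X:\mathbb E[\Phi^*(c|X|)]<\infty\ \forall c>0\}$, and $\mathbb F_{\Phi^*}$ is the set of distribution functions of random variables in $H^{\Phi^*}$; $F^\leftarrow$ is the left-continuous quantile function of $F$. *)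

theory Defs
  imports "HOL-Probability.Probability"
begin

definition ereal_convex_on :: "real set \<Rightarrow> (real \<Rightarrow> ereal) \<Rightarrow> bool" where
  "ereal_convex_on S f \<longleftrightarrow>
     (\<forall>x\<in>S. \<forall>y\<in>S. \<forall>t::real. 0 < t \<and> t < 1 \<longrightarrow>
        f ((1 - t) * x + t * y) \<le> ereal (1 - t) * f x + ereal t * f y)"

definition ereal_lsc_on :: "real set \<Rightarrow> (real \<Rightarrow> ereal) \<Rightarrow> bool" where
  "ereal_lsc_on S f \<longleftrightarrow>
     (\<forall>x\<in>S. \<forall>s::nat \<Rightarrow> real. (\<forall>n. s n \<in> S) \<and> s \<longlonglongrightarrow> x \<longrightarrow>
        f x \<le> liminf (\<lambda>n. f (s n)))"

definition strictly_convex_on :: "real set \<Rightarrow> (real \<Rightarrow> real) \<Rightarrow> bool" where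
  "strictly_convex_on S f \<longleftrightarrow>
     (\<forall>x\<in>S. \<forall>y\<in>S. \<forall>t::real. x \<noteq> y \<and> 0 < t \<and> t < 1 \<longrightarrow>
        f ((1 - t) * x + t * y) < (1 - t) * f x + t * f y)"

definition young_like :: "(real \<Rightarrow> ereal) \<Rightarrow> bool" where
  "young_like \<Phi> \<longleftrightarrow>
     (\<forall>x\<ge>0. \<Phi> x \<ge> 0) \<and>
     ereal_lsc_on {0..} \<Phi> \<and> ereal_convex_on {0..} \<Phi> \<and>
     \<Phi> 0 < \<infinity> \<and> (\<exists>x0>1. \<Phi> x0 < \<infinity>) \<and>
     (INF x\<in>{0..}. \<Phi> x) = 0 \<and>
     ((\<lambda>x. \<Phi> x / ereal x) \<longlongrightarrow> \<infinity>) at_top"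

(* Convex conjugate Phi^*(y) = sup_{x>=0} (x y - Phi x); finite under the standing assumptions *)
definition conj :: "(real \<Rightarrow> ereal) \<Rightarrow> real \<Rightarrow> real" where
  "conj \<Phi> y = real_of_ereal (SUP x\<in>{0..}. ereal (x * y) - \<Phi> x)"

definition atomless :: "'a measure \<Rightarrow> bool" where
  "atomless M \<longleftrightarrow> (\<forall>A\<in>sets M. measure M A > 0 \<longrightarrow>
      (\<exists>B\<in>sets M. B \<subseteq> A \<and> 0 < measure M B \<and> measure M B < measure M A))"

definition H_conj :: "(real \<Rightarrow> ereal) \<Rightarrow> 'a measure \<Rightarrow> ('a \<Rightarrow> real) \<Rightarrow> bool" where
  "H_conj \<Phi> M X \<longleftrightarrow> X \<in> borel_measurable M \<and>
     (\<forall>c>0. integrable M (\<lambda>\<omega>. conj \<Phi> (c * \<bar>X \<omega>\<bar>)))"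

definition distfun :: "'a measure \<Rightarrow> ('a \<Rightarrow> real) \<Rightarrow> real \<Rightarrow> real" where
  "distfun M X = cdf (distr M borel X)"

definition F_conj :: "(real \<Rightarrow> ereal) \<Rightarrow> 'a measure \<Rightarrow> (real \<Rightarrow> real) set" where
  "F_conj \<Phi> M = {distfun M X | X. H_conj \<Phi> M X}"

definition lquantile :: "(real \<Rightarrow> real) \<Rightarrow> real \<Rightarrow> real" where
  "lquantile F u = Inf {x. u \<le> F x}"

end

theory Submission
  imports Defs
begin

text \<open>
  Write F as the distribution function of some X with E[\<Phi>*(c|X|)] finite. The quantile
  transform turns the objective into G x = g x - x with g x = E[\<Phi>*(X + x)], a finite convex
  function. As \<Phi>* is nonnegative and bounded below by a y - b with a > 1, G tends to infinity
  in both directions, so it attains its minimum. If x1 < x2 were two minimizers, Jensen's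
  midpoint inequality for g would be an equality almost surely; strict convexity of \<Phi>* on the
  positive axis then forces X + x2 \<le> 0 almost surely, so g x1 = g x2 = 0 and G x1 > G x2.
\<close>

lemma set_integral_lquantile_distfun:
  fixes M :: "'a measure" and X :: "'a \<Rightarrow> real" and h :: "real \<Rightarrow> real"
  assumes "prob_space M"
    and [measurable]: "X \<in> borel_measurable M" "h \<in> borel_measurable borel"
  shows "(\<integral>u\<in>{0<..<1}. h (lquantile (distfun M X) u) \<partial>lborel) = (\<integral>\<omega>. h (X \<omega>) \<partial>M)"
proof -
  let ?N = "distr M borel X"
  let ?U = "restrict_space lborel {0<..<1::real}"
  interpret prob_space M by fact
  interpret N: cdf_distribution ?N
    by (rule cdf_distribution.intro) simp
  have quantile: "lquantile (distfun M X) = N.I"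
    by (auto simp: lquantile_def distfun_def fun_eq_iff)
  have [measurable]: "N.I \<in> measurable ?U borel"
    using N.measurable_CI by (simp add: measurable_def space_restrict_space sets_restrict_space)
  have "(\<integral>u\<in>{0<..<1}. h (N.I u) \<partial>lborel) = integral\<^sup>L ?U (\<lambda>u. h (N.I u))"
    by (simp add: integral_restrict_space set_lebesgue_integral_def)
  also have "\<dots> = integral\<^sup>L (distr ?U borel N.I) h"
    by (rule integral_distr[symmetric]) simp_all
  also have "\<dots> = integral\<^sup>L ?N h"
    using N.distr_I_eq_M by simp
  also have "\<dots> = (\<integral>\<omega>. h (X \<omega>) \<partial>M)"
    by (rule integral_distr) simp_all
  finally show ?thesis
    using quantile by simp
qed

lemma continuous_coercive_attains_inf:
  fixes f :: "'a::{heine_borel, real_normed_vector} \<Rightarrow> real"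
  assumes "continuous_on UNIV f" and "filterlim f at_top at_infinity"
  shows "\<exists>x. \<forall>y. f x \<le> f y"
proof -
  have "eventually (\<lambda>y. f 0 < f y) at_infinity"
    using assms(2) by (simp add: filterlim_at_top_dense)
  then obtain r where r: "\<And>y. r \<le> norm y \<Longrightarrow> f 0 < f y"
    by (auto simp: eventually_at_infinity)
  obtain x where x: "x \<in> cball 0 \<bar>r\<bar>" "\<And>y. y \<in> cball 0 \<bar>r\<bar> \<Longrightarrow> f x \<le> f y"
    using continuous_attains_inf[of "cball 0 \<bar>r\<bar>" f] continuous_on_subset[OF assms(1)]
    by auto
  have "f x \<le> f y" for y
  proof (cases "y \<in> cball 0 \<bar>r\<bar>")
    case False
    then have "f 0 < f y"
      by (intro r) auto
    moreover have "f x \<le> f 0"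
      by (rule x(2)) simp
    ultimately show ?thesis
      by simp
  qed (use x in auto)
  then show ?thesis
    by blast
qed

subsection \<open>The convex conjugate\<close>

context
  fixes \<Phi> :: "real \<Rightarrow> ereal"
  assumes young: "young_like \<Phi>"
begin

lemma young_like_nonneg: "0 \<le> x \<Longrightarrow> 0 \<le> \<Phi> x"
  using young by (simp add: young_like_def)

lemma SUP_conj_bounded: "(SUP x\<in>{0..}. ereal (x * y) - \<Phi> x) \<le> ereal (max R 1 * \<bar>y\<bar>)"
  if R: "\<And>x. R \<le> x \<Longrightarrow> ereal y < \<Phi> x / ereal x"
proof (rule SUP_least)
  fix x :: real
  assume x: "x \<in> {0..}"
  show "ereal (x * y) - \<Phi> x \<le> ereal (max R 1 * \<bar>y\<bar>)"
  proof (cases "\<Phi> x")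
    case (real p)
    have "x * y \<le> max (max R 1 * \<bar>y\<bar>) p"
    proof (cases "x \<le> max R 1")
      case True
      with x have "x * y \<le> max R 1 * \<bar>y\<bar>"
        by (metis abs_ge_self abs_mult abs_of_nonneg atLeast_iff mult_right_mono order.trans abs_ge_zero)
      then show ?thesis
        by simp
    next
      case False
      then have "R \<le> x" "0 < x"
        by auto
      then have "y < p / x"
        using R[of x] real by simp
      with \<open>0 < x\<close> show ?thesis
        by (simp add: field_simps)
    qed
    moreover have "0 \<le> p" "0 \<le> max R 1 * \<bar>y\<bar>"
      using young_like_nonneg[of x] x real by auto
    ultimately have "x * y - p \<le> max R 1 * \<bar>y\<bar>"
      by (smt (verit))
    with real show ?thesis
      by simp
  qed (use young_like_nonneg[of x] x in auto)
qed

lemma ereal_conj: "ereal (conj \<Phi> y) = (SUP x\<in>{0..}. ereal (x * y) - \<Phi> x)"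
proof -
  let ?S = "SUP x\<in>{0..}. ereal (x * y) - \<Phi> x"
  have "eventually (\<lambda>x. ereal y < \<Phi> x / ereal x) at_top"
    using young by (intro order_tendstoD(1)) (auto simp: young_like_def)
  then obtain R where "\<And>x. R \<le> x \<Longrightarrow> ereal y < \<Phi> x / ereal x"
    by (auto simp: eventually_at_top_linorder)
  then have "?S \<le> ereal (max R 1 * \<bar>y\<bar>)"
    by (rule SUP_conj_bounded)
  moreover have "ereal 0 - \<Phi> 0 \<le> ?S"
    by (rule SUP_upper2[of 0]) auto
  moreover have "\<Phi> 0 < \<infinity>" "0 \<le> \<Phi> 0"
    using young young_like_nonneg[of 0] by (auto simp: young_like_def)
  ultimately have "\<bar>?S\<bar> \<noteq> \<infinity>"
    by (cases ?S; cases "\<Phi> 0") auto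
  then show ?thesis
    unfolding conj_def by (simp add: ereal_real')
qed

lemma conj_ge:
  assumes "0 \<le> x" "\<Phi> x = ereal p"
  shows "x * y - p \<le> conj \<Phi> y"
proof -
  have "ereal (x * y - p) \<le> ereal (conj \<Phi> y)"
    unfolding ereal_conj using assms by (intro SUP_upper2[of x]) auto
  then show ?thesis
    by simp
qed

lemma conj_le:
  assumes "\<And>x p. 0 \<le> x \<Longrightarrow> \<Phi> x = ereal p \<Longrightarrow> x * y - p \<le> B"
  shows "conj \<Phi> y \<le> B"
proof -
  have "(SUP x\<in>{0..}. ereal (x * y) - \<Phi> x) \<le> ereal B"
  proof (rule SUP_least)
    fix x :: real
    assume "x \<in> {0..}"
    then show "ereal (x * y) - \<Phi> x \<le> ereal B"
      using assms[of x] young_like_nonneg[of x] by (cases "\<Phi> x") auto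
  qed
  then have "ereal (conj \<Phi> y) \<le> ereal B"
    unfolding ereal_conj .
  then show ?thesis
    by simp
qed

lemma mono_conj: "mono (conj \<Phi>)"
proof (rule monoI, rule conj_le)
  fix y1 y2 x p :: real
  assume "y1 \<le> y2" "0 \<le> x" "\<Phi> x = ereal p"
  then show "x * y1 - p \<le> conj \<Phi> y2"
    using conj_ge[of x p y2] mult_left_mono[of y1 y2 x] by linarith
qed

lemma convex_on_conj: "convex_on UNIV (conj \<Phi>)"
proof (rule convex_onI)
  fix t a b :: real
  assume t: "0 < t" "t < 1"
  show "conj \<Phi> ((1 - t) *\<^sub>R a + t *\<^sub>R b) \<le> (1 - t) * conj \<Phi> a + t * conj \<Phi> b"
  proof (rule conj_le)
    fix x p
    assume x: "0 \<le> x" "\<Phi> x = ereal p"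
    have "x * ((1 - t) *\<^sub>R a + t *\<^sub>R b) - p = (1 - t) * (x * a - p) + t * (x * b - p)"
      by (simp add: algebra_simps)
    also have "\<dots> \<le> (1 - t) * conj \<Phi> a + t * conj \<Phi> b"
      using conj_ge[OF x, of a] conj_ge[OF x, of b] t by (intro add_mono mult_left_mono) auto
    finally show "x * ((1 - t) *\<^sub>R a + t *\<^sub>R b) - p \<le> (1 - t) * conj \<Phi> a + t * conj \<Phi> b" .
  qed
qed simp

lemma conj_convex_combination:
  "0 \<le> t \<Longrightarrow> t \<le> 1 \<Longrightarrow> conj \<Phi> ((1 - t) * a + t * b) \<le> (1 - t) * conj \<Phi> a + t * conj \<Phi> b"
  using convex_onD[OF convex_on_conj, of t a b] by simp

lemma continuous_on_conj: "continuous_on UNIV (conj \<Phi>)"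
  by (rule convex_on_continuous[OF _ convex_on_conj]) simp

lemma borel_measurable_conj[measurable]: "conj \<Phi> \<in> borel_measurable borel"
  using continuous_on_conj by (rule borel_measurable_continuous_onI)

lemma conj_ge_affine: "\<exists>a b. 1 < a \<and> (\<forall>y. a * y - b \<le> conj \<Phi> y)"
proof -
  obtain x0 where x0: "1 < x0" "\<Phi> x0 < \<infinity>"
    using young by (auto simp: young_like_def)
  then obtain p where "\<Phi> x0 = ereal p"
    using young_like_nonneg[of x0] by (cases "\<Phi> x0") auto
  then show ?thesis
    using conj_ge[of x0 p] x0 by (intro exI[of _ x0] exI[of _ p]) auto
qed

context
  assumes Phi0: "\<Phi> 0 = 0"
begin

lemma conj_nonneg: "0 \<le> conj \<Phi> y"
  using conj_ge[of 0 0 y] Phi0 by (simp add: zero_ereal_def)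

lemma conj_nonpos_eq_0:
  assumes "y \<le> 0"
  shows "conj \<Phi> y = 0"
proof -
  have "conj \<Phi> y \<le> 0"
  proof (rule conj_le)
    fix x p
    assume "0 \<le> x" "\<Phi> x = ereal p"
    then show "x * y - p \<le> 0"
      using young_like_nonneg[of x] assms mult_nonneg_nonpos[of x y] by simp
  qed
  then show ?thesis
    using conj_nonneg[of y] by simp
qed

lemma conj_midpoint_less:
  assumes strict: "strictly_convex_on {0<..} (conj \<Phi>)" and "a < b" "0 < b"
  shows "conj \<Phi> ((a + b) / 2) < (conj \<Phi> a + conj \<Phi> b) / 2"
proof (cases "0 < a")
  case True
  have "conj \<Phi> ((1 - 1/2) * a + (1/2) * b) < (1 - 1/2) * conj \<Phi> a + (1/2) * conj \<Phi> b"
    using True assms(2) by (intro strict[unfolded strictly_convex_on_def, rule_format]) auto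
  then show ?thesis
    by (simp add: field_simps)
next
  case False
  \<comment> \<open>b/2 lies strictly between b/4 and b, and conj at b/4 is at most a quarter of conj at b\<close>
  have "conj \<Phi> ((1 - 1/3) * (b/4) + (1/3) * b) < (1 - 1/3) * conj \<Phi> (b/4) + (1/3) * conj \<Phi> b"
    using assms(3) by (intro strict[unfolded strictly_convex_on_def, rule_format]) auto
  moreover have "conj \<Phi> ((1 - 1/4) * 0 + (1/4) * b) \<le> (1 - 1/4) * conj \<Phi> 0 + (1/4) * conj \<Phi> b"
    by (rule conj_convex_combination) auto
  ultimately have "conj \<Phi> (b / 2) < conj \<Phi> b / 2"
    using conj_nonpos_eq_0[of 0] by simp
  moreover have "conj \<Phi> ((a + b) / 2) \<le> conj \<Phi> (b / 2)"
    using False by (intro monoD[OF mono_conj]) simp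
  ultimately show ?thesis
    using conj_nonpos_eq_0[of a] False by simp
qed

end

end

subsection \<open>Expected conjugate of a shifted random variable\<close>

locale conj_shift = prob_space M for M :: "'a measure" +
  fixes \<Phi> :: "real \<Rightarrow> ereal" and X :: "'a \<Rightarrow> real"
  assumes young: "young_like \<Phi>" and Phi0: "\<Phi> 0 = 0" and H: "H_conj \<Phi> M X"
begin

definition conj_shift_expectation :: "real \<Rightarrow> real" where
  "conj_shift_expectation x = expectation (\<lambda>\<omega>. conj \<Phi> (X \<omega> + x))"

lemma X_measurable[measurable]: "X \<in> borel_measurable M"
  using H by (simp add: H_conj_def)

lemmas [measurable] = borel_measurable_conj[OF young]

lemma integrable_conj_scaled: "0 < c \<Longrightarrow> integrable M (\<lambda>\<omega>. conj \<Phi> (c * \<bar>X \<omega>\<bar>))"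
  using H by (simp add: H_conj_def)

lemma integrable_conj_shift: "integrable M (\<lambda>\<omega>. conj \<Phi> (X \<omega> + x))"
proof (rule Bochner_Integration.integrable_bound)
  show "integrable M (\<lambda>\<omega>. (conj \<Phi> (2 * \<bar>X \<omega>\<bar>) + conj \<Phi> (2 * \<bar>x\<bar>)) / 2)"
    using integrable_conj_scaled[of 2] by simp
  show "AE \<omega> in M. norm (conj \<Phi> (X \<omega> + x)) \<le> norm ((conj \<Phi> (2 * \<bar>X \<omega>\<bar>) + conj \<Phi> (2 * \<bar>x\<bar>)) / 2)"
  proof (rule AE_I2)
    fix \<omega>
    have "conj \<Phi> (X \<omega> + x) \<le> conj \<Phi> ((1 - 1/2) * (2 * \<bar>X \<omega>\<bar>) + (1/2) * (2 * \<bar>x\<bar>))"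
      by (intro monoD[OF mono_conj[OF young]]) auto
    also have "\<dots> \<le> (1 - 1/2) * conj \<Phi> (2 * \<bar>X \<omega>\<bar>) + (1/2) * conj \<Phi> (2 * \<bar>x\<bar>)"
      by (rule conj_convex_combination[OF young]) auto
    finally show "norm (conj \<Phi> (X \<omega> + x)) \<le> norm ((conj \<Phi> (2 * \<bar>X \<omega>\<bar>) + conj \<Phi> (2 * \<bar>x\<bar>)) / 2)"
      using conj_nonneg[OF young Phi0] by (simp add: abs_of_nonneg)
  qed
qed simp

lemma integrable_X:
  assumes affine: "1 < a" "\<And>y. a * y - b \<le> conj \<Phi> y"
  shows "integrable M X"
proof (rule Bochner_Integration.integrable_bound)
  show "integrable M (\<lambda>\<omega>. (conj \<Phi> \<bar>X \<omega>\<bar> + b) / a)"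
    using integrable_conj_scaled[of 1] by simp
  show "AE \<omega> in M. norm (X \<omega>) \<le> norm ((conj \<Phi> \<bar>X \<omega>\<bar> + b) / a)"
  proof (rule AE_I2)
    fix \<omega>
    have "\<bar>X \<omega>\<bar> \<le> (conj \<Phi> \<bar>X \<omega>\<bar> + b) / a"
      using affine(2)[of "\<bar>X \<omega>\<bar>"] affine(1) by (simp add: field_simps)
    moreover have "(conj \<Phi> \<bar>X \<omega>\<bar> + b) / a \<le> \<bar>conj \<Phi> \<bar>X \<omega>\<bar> + b\<bar> / \<bar>a\<bar>"
      using affine(1) by (simp add: divide_right_mono)
    ultimately show "norm (X \<omega>) \<le> norm ((conj \<Phi> \<bar>X \<omega>\<bar> + b) / a)"
      by simp
  qed
qed simp

lemma conj_shift_expectation_nonneg: "0 \<le> conj_shift_expectation x"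
  unfolding conj_shift_expectation_def by (simp add: conj_nonneg[OF young Phi0])

lemma conj_shift_expectation_ge_affine:
  assumes affine: "1 < a" "\<And>y. a * y - b \<le> conj \<Phi> y"
  shows "a * (expectation X + x) - b \<le> conj_shift_expectation x"
proof -
  have "a * (expectation X + x) - b = expectation (\<lambda>\<omega>. a * (X \<omega> + x) - b)"
    using integrable_X[OF affine] by (simp add: algebra_simps prob_space)
  also have "\<dots> \<le> conj_shift_expectation x"
    unfolding conj_shift_expectation_def
    using integrable_X[OF affine] integrable_conj_shift affine(2) by (intro integral_mono) auto
  finally show ?thesis .
qed

lemma convex_on_conj_shift_expectation: "convex_on UNIV conj_shift_expectation"
proof (rule convex_onI)
  fix t x y :: real
  assume t: "0 < t" "t < 1"
  have "conj_shift_expectation ((1 - t) *\<^sub>R x + t *\<^sub>R y)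
      \<le> expectation (\<lambda>\<omega>. (1 - t) * conj \<Phi> (X \<omega> + x) + t * conj \<Phi> (X \<omega> + y))"
    unfolding conj_shift_expectation_def
  proof (rule integral_mono)
    fix \<omega>
    have "X \<omega> + ((1 - t) *\<^sub>R x + t *\<^sub>R y) = (1 - t) * (X \<omega> + x) + t * (X \<omega> + y)"
      by (simp add: algebra_simps)
    then show "conj \<Phi> (X \<omega> + ((1 - t) *\<^sub>R x + t *\<^sub>R y))
        \<le> (1 - t) * conj \<Phi> (X \<omega> + x) + t * conj \<Phi> (X \<omega> + y)"
      using conj_convex_combination[OF young, of t] t by simp
  qed (use integrable_conj_shift in auto)
  also have "\<dots> = (1 - t) * conj_shift_expectation x + t * conj_shift_expectation y"
    unfolding conj_shift_expectation_def using integrable_conj_shift by simp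
  finally show "conj_shift_expectation ((1 - t) *\<^sub>R x + t *\<^sub>R y)
      \<le> (1 - t) * conj_shift_expectation x + t * conj_shift_expectation y" .
qed simp

lemma continuous_on_conj_shift_expectation: "continuous_on UNIV conj_shift_expectation"
  by (rule convex_on_continuous[OF _ convex_on_conj_shift_expectation]) simp

lemma conj_shift_expectation_minus_coercive:
  "filterlim (\<lambda>x. conj_shift_expectation x - x) at_top at_infinity"
  unfolding at_infinity_eq_at_top_bot
proof (rule filterlim_sup)
  obtain a b where affine: "1 < a" "\<And>y. a * y - b \<le> conj \<Phi> y"
    using conj_ge_affine[OF young] by blast
  have "filterlim (\<lambda>x. (a * expectation X - b) + (a - 1) * x) at_top at_top"
    using affine(1) by (intro filterlim_tendsto_add_at_top filterlim_tendsto_pos_mult_at_top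
        filterlim_ident) auto
  then show "filterlim (\<lambda>x. conj_shift_expectation x - x) at_top at_top"
    by (rule filterlim_at_top_mono)
      (use conj_shift_expectation_ge_affine[OF affine] in \<open>auto simp: algebra_simps\<close>)
  show "filterlim (\<lambda>x. conj_shift_expectation x - x) at_top at_bot"
    using filterlim_uminus_at_top_at_bot
    by (rule filterlim_at_top_mono) (use conj_shift_expectation_nonneg in auto)
qed

lemma conj_shift_expectation_eq_0:
  assumes "AE \<omega> in M. X \<omega> + x \<le> 0"
  shows "conj_shift_expectation x = 0"
  unfolding conj_shift_expectation_def
  using assms by (subst integral_cong_AE[where g = "\<lambda>_. 0"])
    (auto elim!: AE_mp intro!: conj_nonpos_eq_0[OF young Phi0])

lemma conj_shift_expectation_midpoint_less:
  assumes strict: "strictly_convex_on {0<..} (conj \<Phi>)"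
    and "x1 < x2" and positive: "\<not> (AE \<omega> in M. X \<omega> + x2 \<le> 0)"
  shows "conj_shift_expectation ((x1 + x2) / 2)
    < (conj_shift_expectation x1 + conj_shift_expectation x2) / 2"
proof -
  define gap where "gap \<omega> = (conj \<Phi> (X \<omega> + x1) + conj \<Phi> (X \<omega> + x2)) / 2
    - conj \<Phi> (X \<omega> + (x1 + x2) / 2)" for \<omega>
  have gap_nonneg: "0 \<le> gap \<omega>" for \<omega>
  proof -
    have "X \<omega> + (x1 + x2) / 2 = (1 - 1/2) * (X \<omega> + x1) + (1/2) * (X \<omega> + x2)"
      by (simp add: field_simps)
    then show ?thesis
      using conj_convex_combination[OF young, of "1/2" "X \<omega> + x1" "X \<omega> + x2"]
      by (simp add: gap_def)
  qed
  have gap_pos: "0 < gap \<omega>" if "0 < X \<omega> + x2" for \<omega>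
  proof -
    have midpoint: "((X \<omega> + x1) + (X \<omega> + x2)) / 2 = X \<omega> + (x1 + x2) / 2"
      by simp
    show ?thesis
      using conj_midpoint_less[OF young Phi0 strict, of "X \<omega> + x1" "X \<omega> + x2"] that assms(2)
      unfolding midpoint gap_def by simp
  qed
  have integrable_gap: "integrable M gap"
    unfolding gap_def using integrable_conj_shift by simp
  have "\<not> (AE \<omega> in M. gap \<omega> = 0)"
  proof
    assume "AE \<omega> in M. gap \<omega> = 0"
    then have "AE \<omega> in M. X \<omega> + x2 \<le> 0"
      by (rule AE_mp, intro AE_I2 impI) (metis gap_pos less_irrefl not_le)
    with positive show False ..
  qed
  then have "expectation gap \<noteq> 0"
    using integral_nonneg_eq_0_iff_AE[OF integrable_gap] gap_nonneg by auto
  moreover have "0 \<le> expectation gap"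
    using gap_nonneg by (simp add: integral_nonneg_AE)
  moreover have "expectation gap = (conj_shift_expectation x1 + conj_shift_expectation x2) / 2
      - conj_shift_expectation ((x1 + x2) / 2)"
    unfolding gap_def conj_shift_expectation_def using integrable_conj_shift by simp
  ultimately show ?thesis
    by linarith
qed

lemma conj_shift_expectation_minus_unique_argmin:
  assumes strict: "strictly_convex_on {0<..} (conj \<Phi>)"
  shows "\<exists>!x. \<forall>y. conj_shift_expectation x - x \<le> conj_shift_expectation y - y"
proof -
  let ?G = "\<lambda>x. conj_shift_expectation x - x"
  have no_two_minimizers: False
    if "x1 < x2" "\<And>y. ?G x1 \<le> ?G y" "\<And>y. ?G x2 \<le> ?G y" for x1 x2
  proof (cases "AE \<omega> in M. X \<omega> + x2 \<le> 0")
    case True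
    then have "AE \<omega> in M. X \<omega> + x1 \<le> 0"
      using \<open>x1 < x2\<close> by (auto elim!: AE_mp)
    then show False
      using that(1) that(2)[of x2] conj_shift_expectation_eq_0 True by fastforce
  next
    case False
    show False
      using conj_shift_expectation_midpoint_less[OF strict that(1) False]
        that(2,3)[of "(x1 + x2) / 2"] by (simp add: field_simps)
  qed
  have "continuous_on UNIV ?G"
    by (intro continuous_intros continuous_on_conj_shift_expectation)
  then obtain x where "\<forall>y. ?G x \<le> ?G y"
    using continuous_coercive_attains_inf conj_shift_expectation_minus_coercive by blast
  then show ?thesis
    using no_two_minimizers by (metis linorder_neqE_linordered_idom)
qed

end

theorem propositionA2:
  fixes \<Phi> :: "real \<Rightarrow> ereal" and M :: "'a measure" and F :: "real \<Rightarrow> real"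
  assumes "young_like \<Phi>"
    and "prob_space M" and "atomless M"
    and "\<Phi> 0 = 0"
    and "strictly_convex_on {0<..} (conj \<Phi>)"
    and "F \<in> F_conj \<Phi> M"
  shows "\<exists>!x::real. \<forall>y::real.
     (\<integral>u\<in>{0<..<1}. conj \<Phi> (lquantile F u + x) \<partial>lborel) - x
       \<le> (\<integral>u\<in>{0<..<1}. conj \<Phi> (lquantile F u + y) \<partial>lborel) - y"
proof -
  obtain X where H: "H_conj \<Phi> M X" and F: "F = distfun M X"
    using assms(6) unfolding F_conj_def by auto
  interpret conj_shift M \<Phi> X
    using assms(1,2,4) H by (simp add: conj_shift_def conj_shift_axioms_def)
  have "(\<integral>u\<in>{0<..<1}. conj \<Phi> (lquantile F u + x) \<partial>lborel) = conj_shift_expectation x" for x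
    unfolding F conj_shift_expectation_def
    by (rule set_integral_lquantile_distfun[OF assms(2)]) (simp_all add: borel_measurable_conj[OF assms(1)])
  then show ?thesis
    using conj_shift_expectation_minus_unique_argmin[OF assms(5)] by simp
qed

end
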